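(* If $G$ is a graph with maximum degree $\Delta(G)\ge 3$, then $\alpha_{\mathrm{od}}(G)\ge |G|/((\Delta(G))^2-1)$.
   Context: All graphs are finite and simple; $|G|$ is the number of vertices. An odd independent set in $G=(V,E)$ is an independent set $S\subseteq V$ such that for every $v\in V\setminus S$, either $N(v)\cap S=\varnothing$ or $|N(v)\cap S|$ is odd, where $N(v)$ is the open neighborhood of $v$. $\alpha_{\mathrm{od}}(G)$ is the maximum size of an odd independent set of $G$. *)

theory Defs
  imports Complex_Main
begin

definition simple_graph :: "'a set \<Rightarrow> ('a \<Rightarrow> 'a \<Rightarrow> bool) \<Rightarrow> bool" where
  "simple_graph V E \<longleftrightarrow> finite V \<and> (\<forall>u v. E u v \<longrightarrow> u \<in> V \<and> v \<in> V)
     \<and> (\<forall>u v. E u v \<longrightarrow> E v u) \<and> (\<forall>v. \<not> E v v)"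

definition nbhd :: "'a set \<Rightarrow> ('a \<Rightarrow> 'a \<Rightarrow> bool) \<Rightarrow> 'a \<Rightarrow> 'a set" where
  "nbhd V E v = {u \<in> V. E v u}"

definition degree :: "'a set \<Rightarrow> ('a \<Rightarrow> 'a \<Rightarrow> bool) \<Rightarrow> 'a \<Rightarrow> nat" where
  "degree V E v = card (nbhd V E v)"

definition max_degree :: "'a set \<Rightarrow> ('a \<Rightarrow> 'a \<Rightarrow> bool) \<Rightarrow> nat" where
  "max_degree V E = Max (insert 0 (degree V E ` V))"

definition independent_set :: "'a set \<Rightarrow> ('a \<Rightarrow> 'a \<Rightarrow> bool) \<Rightarrow> 'a set \<Rightarrow> bool" where
  "independent_set V E S \<longleftrightarrow> S \<subseteq> V \<and> (\<forall>u\<in>S. \<forall>v\<in>S. \<not> E u v)"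

definition odd_independent_set :: "'a set \<Rightarrow> ('a \<Rightarrow> 'a \<Rightarrow> bool) \<Rightarrow> 'a set \<Rightarrow> bool" where
  "odd_independent_set V E S \<longleftrightarrow> independent_set V E S \<and>
     (\<forall>v \<in> V - S. nbhd V E v \<inter> S = {} \<or> odd (card (nbhd V E v \<inter> S)))"

definition alpha_od :: "'a set \<Rightarrow> ('a \<Rightarrow> 'a \<Rightarrow> bool) \<Rightarrow> nat" where
  "alpha_od V E = Max (card ` {S. odd_independent_set V E S})"

end

theory Submission
  imports Defs
begin

text \<open>Greedy argument with \<open>D = \<Delta>(G)\<close>. Repeatedly choose, inside the set \<open>R\<close> of remaining
  vertices, a nonempty odd independent set \<open>U\<close> whose closed 2-ball meets \<open>R\<close> in at most
  \<open>(D\<^sup>2 - 1) |U|\<close> vertices, and delete that 2-ball from \<open>R\<close>. The chosen sets are pairwise at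
  distance at least 3, so no outside vertex sees two of them and their union stays odd
  independent.

  Such a \<open>U\<close> always exists. A single vertex works unless every vertex of \<open>R\<close> has at least
  \<open>D\<^sup>2\<close> vertices of its 2-ball in \<open>R\<close>. As a 2-ball has at most \<open>D\<^sup>2 + 1\<close> vertices, with a loss for
  every overlap between the branches through different neighbours, there is then either a
  Moore vertex, three of whose neighbours in \<open>R\<close> form an odd independent triple with cheap
  2-ball, or every vertex of \<open>R\<close> has degree \<open>D\<close> and a 2-ball of exactly \<open>D\<^sup>2\<close> vertices inside
  \<open>R\<close>. In the latter case at most one pair of branches overlaps, which leaves such a triple
  when \<open>D \<ge> 4\<close>; when \<open>D = 3\<close> the 2-ball has 9 vertices of degree 3, so some edge leaves it and
  yields a cheap odd independent pair at distance 3.\<close>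

lemma card_Un_overlap:
  assumes "finite A" "finite B" "A \<inter> B \<noteq> {}"
  shows "card (A \<union> B) + 1 \<le> card A + card B"
proof -
  have "1 \<le> card (A \<inter> B)"
    using assms by (simp add: Suc_le_eq card_gt_0_iff)
  then show ?thesis
    using card_Un_Int[OF assms(1,2)] by linarith
qed

text \<open>The overlap \<open>(\<Sum>i\<in>I. card (F i)) - card (\<Union>i\<in>I. F i)\<close> grows with the index set.\<close>
lemma card_UN_deficit_mono:
  assumes "finite I" "J \<subseteq> I" "\<And>i. finite (F i)"
  shows "card (\<Union>i\<in>I. F i) + (\<Sum>i\<in>J. card (F i)) \<le> card (\<Union>i\<in>J. F i) + (\<Sum>i\<in>I. card (F i))"
proof -
  have "card (\<Union>i\<in>I. F i) \<le> card (\<Union>i\<in>J. F i) + card (\<Union>i\<in>I-J. F i)"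
    using card_Un_le[of "\<Union>i\<in>J. F i" "\<Union>i\<in>I-J. F i"] assms(2)
    by (metis Diff_partition UN_Un)
  moreover have "card (\<Union>i\<in>I-J. F i) \<le> (\<Sum>i\<in>I-J. card (F i))"
    using assms(1) by (intro card_UN_le) simp
  moreover have "(\<Sum>i\<in>I. card (F i)) = (\<Sum>i\<in>I-J. card (F i)) + (\<Sum>i\<in>J. card (F i))"
    using sum.subset_diff[OF assms(2,1)] by simp
  ultimately show ?thesis by linarith
qed

lemma card_UN_overlap:
  assumes "finite I" "\<And>i. finite (F i)" "a \<in> I" "b \<in> I" "a \<noteq> b" "F a \<inter> F b \<noteq> {}"
  shows "card (\<Union>i\<in>I. F i) + 1 \<le> (\<Sum>i\<in>I. card (F i))"
proof -
  have "card (F a \<union> F b) + 1 \<le> card (F a) + card (F b)"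
    using assms by (intro card_Un_overlap) auto
  then show ?thesis
    using card_UN_deficit_mono[of I "{a, b}" F] assms by auto
qed

lemma card_UN_two_overlaps:
  assumes "finite I" "\<And>i. finite (F i)" "a \<in> I" "b \<in> I" "c \<in> I" "d \<in> I"
    "a \<noteq> b" "c \<noteq> d" "{a, b} \<noteq> {c, d}" "F a \<inter> F b \<noteq> {}" "F c \<inter> F d \<noteq> {}"
  shows "card (\<Union>i\<in>I. F i) + 2 \<le> (\<Sum>i\<in>I. card (F i))"
proof (cases "{a, b} \<inter> {c, d} = {}")
  case True
  have "card (F a \<union> F b) + 1 \<le> card (F a) + card (F b)"
    using assms(2,10) by (intro card_Un_overlap)
  moreover have "card (F c \<union> F d) + 1 \<le> card (F c) + card (F d)"
    using assms(2,11) by (intro card_Un_overlap)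
  moreover have "card ((F a \<union> F b) \<union> (F c \<union> F d)) \<le> card (F a \<union> F b) + card (F c \<union> F d)"
    by (rule card_Un_le)
  ultimately show ?thesis
    using card_UN_deficit_mono[of I "{a, b, c, d}" F] assms True
    by (auto simp: Un_assoc insert_commute)
next
  case False
  then obtain x y z where xyz: "{x, y, z} \<subseteq> I" "x \<noteq> y" "x \<noteq> z" "y \<noteq> z"
    "F x \<inter> F y \<noteq> {}" "F x \<inter> F z \<noteq> {}"
    using assms by (auto simp: Int_commute doubleton_eq_iff)
  have "card (F x \<union> F y) + 1 \<le> card (F x) + card (F y)"
    using xyz assms(2) by (intro card_Un_overlap) auto
  moreover have "card ((F x \<union> F y) \<union> F z) + 1 \<le> card (F x \<union> F y) + card (F z)"
    using xyz assms(2) by (intro card_Un_overlap) auto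
  ultimately show ?thesis
    using card_UN_deficit_mono[of I "{x, y, z}" F] assms(1,2) xyz
    by (auto simp: Un_assoc)
qed

lemma obtain_three_distinct:
  assumes "finite X" "3 \<le> card X"
  obtains a b c where "a \<in> X" "b \<in> X" "c \<in> X" "a \<noteq> b" "a \<noteq> c" "b \<noteq> c"
proof -
  obtain T where "T \<subseteq> X" "card T = 3"
    using obtain_subset_with_card_n assms(2) by metis
  then show ?thesis
    using that unfolding card_3_iff by blast
qed

lemma obtain_triple_avoiding_unique_pair:
  assumes "finite X" "4 \<le> card X"
    and unique: "\<And>a b c d. \<lbrakk>a \<in> X; b \<in> X; c \<in> X; d \<in> X; a \<noteq> b; c \<noteq> d; P a b; P c d\<rbrakk>
      \<Longrightarrow> {a, b} = {c, d}"
  obtains a b c where "a \<in> X" "b \<in> X" "c \<in> X" "a \<noteq> b" "a \<noteq> c" "b \<noteq> c"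
    "\<not> P a b" "\<not> P a c" "\<not> P b c"
proof (cases "\<exists>a\<in>X. \<exists>b\<in>X. a \<noteq> b \<and> P a b")
  case True
  then obtain a0 b0 where ab0: "a0 \<in> X" "b0 \<in> X" "a0 \<noteq> b0" "P a0 b0" by blast
  have "3 \<le> card (X - {a0})"
    using assms(1,2) ab0(1) by simp
  then obtain a b c where "a \<in> X - {a0}" "b \<in> X - {a0}" "c \<in> X - {a0}"
    "a \<noteq> b" "a \<noteq> c" "b \<noteq> c"
    using obtain_three_distinct assms(1) by (metis finite_Diff)
  moreover have "\<not> P x y" if "x \<in> X - {a0}" "y \<in> X - {a0}" "x \<noteq> y" for x y
    using unique[of x y a0 b0] that ab0 by (auto simp: doubleton_eq_iff)
  ultimately show ?thesis
    using that by blast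
next
  case False
  have "3 \<le> card X"
    using assms(2) by simp
  then obtain a b c where "a \<in> X" "b \<in> X" "c \<in> X" "a \<noteq> b" "a \<noteq> c" "b \<noteq> c"
    using obtain_three_distinct[OF assms(1)] by blast
  then show ?thesis
    using that False by blast
qed

lemma empty_or_odd_card_if_subsingleton:
  assumes "\<And>x y. x \<in> X \<Longrightarrow> y \<in> X \<Longrightarrow> x = y"
  shows "X = {} \<or> odd (card X)"
proof (cases "X = {}")
  case False
  then obtain x where "X = {x}"
    using assms by blast
  then show ?thesis by simp
qed simp

lemma even_sum_card_adjacent:
  assumes "finite C" "symp E" "irreflp E"
  shows "even (\<Sum>z\<in>C. card {x\<in>C. E z x})"
  using assms(1)
proof (induction C rule: finite_induct)
  case empty
  then show ?case by simp
next
  case (insert y C)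
  have "card {x\<in>insert y C. E z x} = card {x\<in>C. E z x} + (if E z y then 1 else 0)"
    if "z \<in> C" for z
  proof -
    have "{x\<in>insert y C. E z x} = (if E z y then insert y {x\<in>C. E z x} else {x\<in>C. E z x})"
      by auto
    then show ?thesis
      using insert.hyps by simp
  qed
  then have "(\<Sum>z\<in>C. card {x\<in>insert y C. E z x})
      = (\<Sum>z\<in>C. card {x\<in>C. E z x}) + card {z\<in>C. E z y}"
    using insert.hyps(1) by (simp add: sum.distrib sum.If_cases Int_def)
  moreover have "{z\<in>C. E z y} = {x\<in>C. E y x}" "{x\<in>insert y C. E y x} = {x\<in>C. E y x}"
    using assms(2,3) by (auto simp: symp_def irreflp_def)
  ultimately show ?case
    using insert by simp
qed

locale sgraph =
  fixes V :: "'a set" and E :: "'a \<Rightarrow> 'a \<Rightarrow> bool"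
  assumes simple: "simple_graph V E"
begin

abbreviation N :: "'a \<Rightarrow> 'a set" where
  "N v \<equiv> nbhd V E v"

lemma finite_V: "finite V"
  using simple unfolding simple_graph_def by blast

lemma edge_in_V: "E u v \<Longrightarrow> u \<in> V \<and> v \<in> V"
  using simple unfolding simple_graph_def by blast

lemma edge_sym: "E u v \<Longrightarrow> E v u"
  using simple unfolding simple_graph_def by blast

lemma edge_irrefl: "\<not> E v v"
  using simple unfolding simple_graph_def by blast

lemma mem_N: "x \<in> N v \<longleftrightarrow> E v x"
  unfolding nbhd_def using edge_in_V by auto

lemma finite_N: "finite (N v)"
  using finite_V by (simp add: nbhd_def)

lemma N_subset_V: "N v \<subseteq> V"
  by (auto simp: nbhd_def)

lemma obtain_edge_leaving:
  assumes "C \<subseteq> V" "odd (card C)" "\<And>u. u \<in> C \<Longrightarrow> odd (card (N u))"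
  obtains z q where "z \<in> C" "E z q" "q \<notin> C"
proof -
  have "\<exists>z\<in>C. \<exists>q. E z q \<and> q \<notin> C"
  proof (rule ccontr)
    assume "\<not> ?thesis"
    then have "{x\<in>C. E z x} = N z" if "z \<in> C" for z
      using that edge_in_V by (auto simp: mem_N)
    then have "(\<Sum>z\<in>C. card {x\<in>C. E z x}) = (\<Sum>z\<in>C. card (N z))"
      by simp
    moreover have "finite C"
      using assms(1) finite_V finite_subset by blast
    moreover have "symp E" "irreflp E"
      using edge_sym edge_irrefl by (auto intro: sympI irreflpI)
    moreover have "{u\<in>C. odd (card (N u))} = C"
      using assms(3) by blast
    ultimately show False
      using even_sum_card_adjacent[of C E] even_sum_iff[of C "\<lambda>z. card (N z)"] assms(2)
      by simp
  qed
  then show ?thesis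
    using that by blast
qed

lemma card_N_le_max_degree: "v \<in> V \<Longrightarrow> card (N v) \<le> max_degree V E"
  unfolding max_degree_def degree_def using finite_V by (intro Max_ge) auto

lemma card_le_alpha_od:
  assumes "odd_independent_set V E S"
  shows "card S \<le> alpha_od V E"
proof -
  have "{S. odd_independent_set V E S} \<subseteq> Pow V"
    unfolding odd_independent_set_def independent_set_def by auto
  then have "finite {S. odd_independent_set V E S}"
    using finite_V finite_subset by blast
  then show ?thesis
    unfolding alpha_od_def using assms by (intro Max_ge) auto
qed

definition ball2 :: "'a set \<Rightarrow> 'a set" where
  "ball2 U = {x \<in> V. \<exists>u\<in>U. x = u \<or> E u x \<or> (\<exists>z. E u z \<and> E z x)}"

lemma finite_ball2: "finite (ball2 U)"
  using finite_V by (simp add: ball2_def)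

lemma subset_ball2: "U \<subseteq> V \<Longrightarrow> U \<subseteq> ball2 U"
  by (auto simp: ball2_def)

lemma ball2_insert: "ball2 (insert a U) = ball2 {a} \<union> ball2 U"
  by (auto simp: ball2_def)

lemma mem_ball2_singleton:
  "x \<in> ball2 {v} \<longleftrightarrow> x \<in> V \<and> (x = v \<or> E v x \<or> (\<exists>z. E v z \<and> E z x))"
  by (auto simp: ball2_def)

lemma N_subset_ball2: "N v \<subseteq> ball2 {v}"
  by (auto simp: nbhd_def ball2_def)

lemma odd_independent_singleton: "v \<in> V \<Longrightarrow> odd_independent_set V E {v}"
  unfolding odd_independent_set_def independent_set_def
  using edge_irrefl by (intro conjI ballI empty_or_odd_card_if_subsingleton) auto

lemma odd_independent_Un:
  assumes "odd_independent_set V E S1" "odd_independent_set V E S2" "S2 \<inter> ball2 S1 = {}"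
  shows "odd_independent_set V E (S1 \<union> S2)"
proof -
  have far: "\<not> E u w" "\<not> (E x u \<and> E x w)" if "u \<in> S1" "w \<in> S2" for u w x
  proof -
    have "w \<in> V" "w \<notin> ball2 S1"
      using that assms(2,3) by (auto simp: odd_independent_set_def independent_set_def)
    then show "\<not> E u w" "\<not> (E x u \<and> E x w)"
      using that edge_sym unfolding ball2_def by blast+
  qed
  have sees_one: "N x \<inter> (S1 \<union> S2) = N x \<inter> S1 \<or> N x \<inter> (S1 \<union> S2) = N x \<inter> S2" for x
    using far(2) by (auto simp: mem_N)
  show ?thesis
    unfolding odd_independent_set_def independent_set_def
  proof (intro conjI ballI)
    show "S1 \<union> S2 \<subseteq> V"
      using assms(1,2) by (simp add: odd_independent_set_def independent_set_def)
    show "\<not> E u w" if "u \<in> S1 \<union> S2" "w \<in> S1 \<union> S2" for u w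
      using that assms(1,2) far(1) edge_sym
      unfolding odd_independent_set_def independent_set_def by blast
    show "N x \<inter> (S1 \<union> S2) = {} \<or> odd (card (N x \<inter> (S1 \<union> S2)))"
      if x: "x \<in> V - (S1 \<union> S2)" for x
      using sees_one[of x]
    proof
      assume seen: "N x \<inter> (S1 \<union> S2) = N x \<inter> S1"
      show ?thesis
        unfolding seen using x assms(1) unfolding odd_independent_set_def by blast
    next
      assume seen: "N x \<inter> (S1 \<union> S2) = N x \<inter> S2"
      show ?thesis
        unfolding seen using x assms(2) unfolding odd_independent_set_def by blast
    qed
  qed
qed

lemma odd_independent_pair:
  assumes "v \<in> V" "q \<in> V" "q \<notin> ball2 {v}"
  shows "odd_independent_set V E {v, q}"
  using odd_independent_Un[of "{v}" "{q}"] odd_independent_singleton assms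
  by (auto simp: insert_commute)

text \<open>The 2-ball of \<open>v\<close> is \<open>v\<close> together with the branches through its neighbours, each of size
  at most \<open>D\<close> under a degree bound \<open>D\<close>; every overlap of two branches costs a vertex against
  the Moore bound \<open>D\<^sup>2 + 1\<close>.\<close>
definition branch :: "'a \<Rightarrow> 'a \<Rightarrow> 'a set" where
  "branch v u = insert u (N u - {v})"

lemma finite_branch: "finite (branch v u)"
  using finite_N by (simp add: branch_def)

lemma ball2_singleton_eq: "v \<in> V \<Longrightarrow> ball2 {v} = insert v (\<Union>u\<in>N v. branch v u)"
  by (auto simp: mem_ball2_singleton branch_def mem_N dest: edge_in_V) (use mem_N in blast)

lemma odd_independent_triple:
  assumes "a \<in> N w" "b \<in> N w" "c \<in> N w" "a \<noteq> b" "a \<noteq> c" "b \<noteq> c"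
    and "branch w a \<inter> branch w b = {}" "branch w a \<inter> branch w c = {}"
      "branch w b \<inter> branch w c = {}"
  shows "odd_independent_set V E {a, b, c}"
  unfolding odd_independent_set_def independent_set_def
proof (intro conjI ballI)
  show "{a, b, c} \<subseteq> V"
    using assms(1-3) N_subset_V by blast
  have "w \<noteq> a" "w \<noteq> b" "w \<noteq> c"
    using assms(1-3) edge_irrefl by (auto simp: mem_N)
  have disj: "\<not> (E x p \<and> E x q)" if "p \<in> {a, b, c}" "q \<in> {a, b, c}" "p \<noteq> q" "x \<noteq> w" for x p q
  proof
    assume "E x p \<and> E x q"
    then have "x \<in> branch w p \<inter> branch w q"
      using \<open>x \<noteq> w\<close> edge_sym by (auto simp: branch_def mem_N)
    then show False
      using that assms(7-9) by blast
  qed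
  show "\<not> E p q" if "p \<in> {a, b, c}" "q \<in> {a, b, c}" for p q
    using that assms(1-3,7-9) \<open>w \<noteq> a\<close> \<open>w \<noteq> b\<close> \<open>w \<noteq> c\<close> edge_irrefl edge_sym
    by (auto simp: branch_def mem_N)
  show "N x \<inter> {a, b, c} = {} \<or> odd (card (N x \<inter> {a, b, c}))" if "x \<in> V - {a, b, c}" for x
  proof (cases "x = w")
    case True
    then have "N x \<inter> {a, b, c} = {a, b, c}"
      using assms by auto
    then show ?thesis
      using assms by simp
  next
    case False
    then show ?thesis
      using disj by (intro empty_or_odd_card_if_subsingleton) (auto simp: mem_N)
  qed
qed

end

locale degree_bounded_graph = sgraph +
  fixes D :: nat
  assumes degree_le: "v \<in> V \<Longrightarrow> card (N v) \<le> D"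
begin

lemma card_branch_le:
  assumes "u \<in> N v"
  shows "card (branch v u) \<le> D"
proof -
  have "u \<in> V" "v \<in> N u"
    using assms edge_in_V edge_sym by (auto simp: mem_N)
  have "card (branch v u) \<le> Suc (card (N u - {v}))"
    unfolding branch_def using finite_N by (simp add: card_insert_if)
  also have "\<dots> = card (N u)"
    using card.remove[OF finite_N \<open>v \<in> N u\<close>] by simp
  finally have "card (branch v u) \<le> card (N u)" .
  then show ?thesis
    using degree_le[OF \<open>u \<in> V\<close>] by linarith
qed

lemma card_ball2_singleton_le_deficit:
  assumes "v \<in> V" "card (\<Union>u\<in>N v. branch v u) + k \<le> (\<Sum>u\<in>N v. card (branch v u))"
  shows "card (ball2 {v}) + k \<le> 1 + D * card (N v)"
proof -
  have "card (ball2 {v}) \<le> 1 + card (\<Union>u\<in>N v. branch v u)"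
    unfolding ball2_singleton_eq[OF assms(1)] by (simp add: card_insert_le_m1)
  moreover have "(\<Sum>u\<in>N v. card (branch v u)) \<le> D * card (N v)"
    using sum_bounded_above[of "N v" "\<lambda>u. card (branch v u)" D] card_branch_le by (simp add: mult.commute)
  ultimately show ?thesis
    using assms(2) by linarith
qed

lemma card_ball2_singleton_le: "v \<in> V \<Longrightarrow> card (ball2 {v}) \<le> 1 + D * card (N v)"
  using card_ball2_singleton_le_deficit[of v 0] card_UN_le[OF finite_N, of "branch v"] by simp

lemma card_ball2_singleton_le_Moore: "v \<in> V \<Longrightarrow> card (ball2 {v}) \<le> D * D + 1"
  using card_ball2_singleton_le[of v] mult_le_mono2[OF degree_le[of v], of D] by linarith

lemma Moore_vertex:
  assumes "v \<in> V" "card (ball2 {v}) = D * D + 1"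
  shows "card (N v) = D"
    and "\<And>a b. \<lbrakk>a \<in> N v; b \<in> N v; a \<noteq> b\<rbrakk> \<Longrightarrow> branch v a \<inter> branch v b = {}"
proof -
  have "D * D \<le> D * card (N v)"
    using card_ball2_singleton_le[OF assms(1)] assms(2) by linarith
  then show "card (N v) = D"
    using degree_le[OF assms(1)] by (auto simp: mult_le_cancel1)
  fix a b
  assume ab: "a \<in> N v" "b \<in> N v" "a \<noteq> b"
  show "branch v a \<inter> branch v b = {}"
  proof (rule ccontr)
    assume "branch v a \<inter> branch v b \<noteq> {}"
    then have "card (ball2 {v}) + 1 \<le> 1 + D * card (N v)"
      by (intro card_ball2_singleton_le_deficit assms(1)
          card_UN_overlap[OF finite_N finite_branch ab])
    then show False
      using assms(2) mult_le_mono2[OF degree_le[OF assms(1)], of D] by linarith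
  qed
qed

lemma degree_eq_if_card_ball2_ge:
  assumes "2 \<le> D" "v \<in> V" "D * D \<le> card (ball2 {v})"
  shows "card (N v) = D"
proof (rule ccontr)
  assume "card (N v) \<noteq> D"
  then have "D * (card (N v) + 1) \<le> D * D"
    using degree_le[OF assms(2)] by (intro mult_le_mono2) linarith
  then show False
    using card_ball2_singleton_le[OF assms(2)] assms(1,3) by (simp add: algebra_simps)
qed

lemma overlapping_branches_unique:
  assumes "v \<in> V" "D * card (N v) \<le> card (ball2 {v})"
    and "a \<in> N v" "b \<in> N v" "c \<in> N v" "d \<in> N v" "a \<noteq> b" "c \<noteq> d"
    and "branch v a \<inter> branch v b \<noteq> {}" "branch v c \<inter> branch v d \<noteq> {}"
  shows "{a, b} = {c, d}"
proof (rule ccontr)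
  assume "{a, b} \<noteq> {c, d}"
  then have "card (ball2 {v}) + 2 \<le> 1 + D * card (N v)"
    by (intro card_ball2_singleton_le_deficit assms(1)
        card_UN_two_overlaps[OF finite_N finite_branch assms(3-8) _ assms(9,10)])
  then show False
    using assms(2) by linarith
qed

text \<open>Any two of the three balls share the closed neighbourhood of \<open>w\<close>, which has at least
  four vertices.\<close>
lemma card_ball2_triple_le:
  assumes "a \<in> N w" "b \<in> N w" "c \<in> N w" "a \<noteq> b" "a \<noteq> c" "b \<noteq> c"
  shows "card (ball2 {a, b, c}) \<le> 3 * (D * D - 1)"
proof -
  let ?K = "insert w (N w)"
  have K_sub: "?K \<subseteq> ball2 {t}" if "t \<in> N w" for t
    using that edge_sym edge_in_V by (auto simp: mem_ball2_singleton mem_N)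
  have "3 \<le> card (N w)"
    using assms finite_N card_mono[of "N w" "{a, b, c}"] by simp
  then have "4 \<le> card ?K"
    using finite_N edge_irrefl by (simp add: mem_N)
  have "card ?K \<le> card (ball2 {a} \<inter> ball2 {b})"
    using K_sub assms(1,2) finite_ball2 by (intro card_mono) auto
  moreover have "card ?K \<le> card ((ball2 {a} \<union> ball2 {b}) \<inter> ball2 {c})"
    using K_sub assms(1,3) finite_ball2 by (intro card_mono) auto
  moreover note card_Un_Int[OF finite_ball2 finite_ball2, of "{a}" "{b}"]
    card_Un_Int[OF finite_UnI[OF finite_ball2 finite_ball2] finite_ball2, of "{a}" "{b}" "{c}"]
  moreover have "card (ball2 {a}) \<le> D * D + 1" "card (ball2 {b}) \<le> D * D + 1"
    "card (ball2 {c}) \<le> D * D + 1"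
    using assms(1-3) N_subset_V card_ball2_singleton_le_Moore by blast+
  ultimately have "card (ball2 {a} \<union> ball2 {b} \<union> ball2 {c}) + 8 \<le> 3 * (D * D) + 3"
    using \<open>4 \<le> card ?K\<close> by linarith
  moreover have "w \<in> V"
    using assms(1) edge_in_V by (simp add: mem_N)
  then have "3 \<le> D"
    using \<open>3 \<le> card (N w)\<close> degree_le by (meson le_trans)
  moreover have "ball2 {a, b, c} = ball2 {a} \<union> ball2 {b} \<union> ball2 {c}"
    by (metis ball2_insert sup_assoc)
  ultimately show ?thesis
    by (simp add: diff_mult_distrib2)
qed

text \<open>An affordable \<open>U\<close> can join the greedy solution: it pays \<open>D\<^sup>2 - 1\<close> per vertex for the
  vertices of \<open>R\<close> in its 2-ball, which are then discarded.\<close>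
definition affordable :: "'a set \<Rightarrow> 'a set \<Rightarrow> bool" where
  "affordable R U \<longleftrightarrow> U \<subseteq> R \<and> U \<noteq> {} \<and> odd_independent_set V E U
     \<and> card (ball2 U \<inter> R) \<le> (D * D - 1) * card U"

lemma affordable_singleton:
  "\<lbrakk>R \<subseteq> V; v \<in> R; card (ball2 {v} \<inter> R) \<le> D * D - 1\<rbrakk> \<Longrightarrow> affordable R {v}"
  unfolding affordable_def using odd_independent_singleton by auto

lemma affordable_triple:
  assumes "a \<in> N w" "b \<in> N w" "c \<in> N w" "a \<noteq> b" "a \<noteq> c" "b \<noteq> c"
    and "branch w a \<inter> branch w b = {}" "branch w a \<inter> branch w c = {}"
      "branch w b \<inter> branch w c = {}"
    and "{a, b, c} \<subseteq> R"
  shows "affordable R {a, b, c}"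
proof -
  have "card (ball2 {a, b, c} \<inter> R) \<le> card (ball2 {a, b, c})"
    by (rule card_mono[OF finite_ball2 Int_lower1])
  also have "\<dots> \<le> 3 * (D * D - 1)"
    by (rule card_ball2_triple_le[OF assms(1-6)])
  also have "\<dots> = (D * D - 1) * card {a, b, c}"
    using assms(4-6) by simp
  finally show ?thesis
    unfolding affordable_def using odd_independent_triple[OF assms(1-9)] assms(10) by simp
qed

lemma affordable_pair:
  assumes "R \<subseteq> V" "v \<in> R" "q \<in> R" "z \<in> ball2 {v}" "E z q" "q \<notin> ball2 {v}"
    and "card (ball2 {v}) \<le> D * D" "card (ball2 {q}) \<le> D * D"
  shows "affordable R {v, q}"
proof -
  have "q \<in> V" "v \<noteq> q"
    using assms(1-3,6) by (auto simp: mem_ball2_singleton)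
  have "z \<noteq> v" "\<not> E v z"
    using assms(5,6) \<open>q \<in> V\<close> by (auto simp: mem_ball2_singleton)
  then obtain x where "E v x" "E x z"
    using assms(4) by (auto simp: mem_ball2_singleton)
  moreover have "E q z" "E z x"
    using assms(5) \<open>E x z\<close> edge_sym by blast+
  ultimately have "{x, z} \<subseteq> ball2 {v} \<inter> ball2 {q}" "x \<noteq> z"
    using assms(4) \<open>\<not> E v z\<close> edge_in_V by (auto simp: mem_ball2_singleton)
  then have "2 \<le> card (ball2 {v} \<inter> ball2 {q})"
    using card_mono[of "ball2 {v} \<inter> ball2 {q}" "{x, z}"] finite_ball2 by auto
  then have "card (ball2 {v, q}) + 2 \<le> card (ball2 {v}) + card (ball2 {q})"
    unfolding ball2_insert[of v "{q}"]
    using card_Un_Int[OF finite_ball2 finite_ball2, of "{v}" "{q}"] by linarith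
  moreover have "card (ball2 {v, q} \<inter> R) \<le> card (ball2 {v, q})"
    by (rule card_mono[OF finite_ball2 Int_lower1])
  ultimately have "card (ball2 {v, q} \<inter> R) \<le> (D * D - 1) * card {v, q}"
    using assms(7,8) \<open>v \<noteq> q\<close> by (simp add: diff_mult_distrib)
  then show ?thesis
    unfolding affordable_def
    using odd_independent_pair[OF _ \<open>q \<in> V\<close> assms(6)] assms(1-3) by auto
qed

lemma exists_affordable_at_Moore_vertex:
  assumes "v \<in> V" "card (ball2 {v}) = D * D + 1" "3 \<le> card (N v \<inter> R)"
  shows "\<exists>U. affordable R U"
proof -
  obtain a b c where "a \<in> N v \<inter> R" "b \<in> N v \<inter> R" "c \<in> N v \<inter> R" "a \<noteq> b" "a \<noteq> c" "b \<noteq> c"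
    using obtain_three_distinct[OF _ assms(3)] finite_N by blast
  then have "affordable R {a, b, c}"
    using Moore_vertex(2)[OF assms(1,2)] by (intro affordable_triple) auto
  then show ?thesis by blast
qed


lemma Moore_neighbour_inside:
  assumes "R \<subseteq> V" "\<And>u. u \<in> R \<Longrightarrow> D * D \<le> card (ball2 {u} \<inter> R)"
    and "v \<in> V" "card (ball2 {v}) = D * D + 1"
    and "a \<in> N v" "a \<notin> R" "b \<in> N v" "b \<in> R"
  shows "card (ball2 {b}) = D * D + 1" "N b \<subseteq> R"
proof -
  have "a \<in> V" "b \<in> V" "a \<noteq> b"
    using assms(5-8) N_subset_V by auto
  moreover have "E b v" "E v a"
    using assms(5,7) edge_sym by (auto simp: mem_N)
  ultimately have "a \<in> ball2 {b} - R"
    using assms(6) unfolding mem_ball2_singleton Diff_iff by blast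
  then have "0 < card (ball2 {b} - R)"
    using finite_ball2 by (auto simp: card_gt_0_iff)
  moreover have "card (ball2 {b}) = card (ball2 {b} \<inter> R) + card (ball2 {b} - R)"
    using card_Int_Diff[OF finite_ball2] .
  ultimately have "card (ball2 {b}) = D * D + 1" "card (ball2 {b} - R) = 1"
    using assms(2)[OF assms(8)] card_ball2_singleton_le_Moore[OF \<open>b \<in> V\<close>] by linarith+
  then show "card (ball2 {b}) = D * D + 1"
    by blast
  have "ball2 {b} - R = {a}"
    using \<open>card (ball2 {b} - R) = 1\<close> \<open>a \<in> ball2 {b} - R\<close>
    by (metis card_1_singletonE singletonD)
  moreover have "\<not> E b a"
  proof
    assume "E b a"
    then have "a \<in> branch v a \<inter> branch v b"
      using assms(5) edge_irrefl by (auto simp: branch_def mem_N)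
    then show False
      using Moore_vertex(2)[OF assms(3,4,5,7) \<open>a \<noteq> b\<close>] by blast
  qed
  ultimately show "N b \<subseteq> R"
    using N_subset_ball2[of b] by (auto simp: mem_N)
qed

lemma exists_affordable_near_Moore_vertex:
  assumes "3 \<le> D" "R \<subseteq> V" "\<And>u. u \<in> R \<Longrightarrow> D * D \<le> card (ball2 {u} \<inter> R)"
    and "v \<in> R" "card (ball2 {v}) = D * D + 1"
  shows "\<exists>U. affordable R U"
proof (cases "3 \<le> card (N v \<inter> R)")
  case True
  then show ?thesis
    using exists_affordable_at_Moore_vertex assms(2,4,5) by blast
next
  case False
  have "v \<in> V"
    using assms(2,4) by blast
  have "card (N v - R) \<le> card (ball2 {v} - R)"
    using N_subset_ball2 finite_ball2 by (intro card_mono) auto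
  moreover have "card (ball2 {v} - R) \<le> 1"
    using card_Int_Diff[OF finite_ball2, of "{v}" R] assms(3)[OF assms(4)] assms(5) by linarith
  moreover have "card (N v) = card (N v \<inter> R) + card (N v - R)"
    using card_Int_Diff[OF finite_N] .
  ultimately have "card (N v \<inter> R) \<noteq> 0" "card (N v - R) \<noteq> 0"
    using False Moore_vertex(1)[OF \<open>v \<in> V\<close> assms(5)] assms(1) by linarith+
  then obtain a b where "a \<in> N v" "a \<notin> R" "b \<in> N v" "b \<in> R"
    by (metis Diff_iff IntE card.empty ex_in_conv)
  note b = Moore_neighbour_inside[OF assms(2,3) \<open>v \<in> V\<close> assms(5) this]
  have "b \<in> V"
    using \<open>b \<in> R\<close> assms(2) by blast
  then have "3 \<le> card (N b \<inter> R)"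
    using Moore_vertex(1)[OF _ b(1)] b(2) assms(1) by (simp add: Int_absorb2)
  then show ?thesis
    using exists_affordable_at_Moore_vertex[OF \<open>b \<in> V\<close> b(1)] by blast
qed

lemma exists_affordable_if_regular:
  assumes "3 \<le> D" "R \<subseteq> V" "v \<in> R"
    and regular: "\<And>u. u \<in> R \<Longrightarrow> card (ball2 {u}) = D * D \<and> ball2 {u} \<subseteq> R"
  shows "\<exists>U. affordable R U"
proof -
  have degree: "card (N u) = D" if "u \<in> R" for u
    using regular[OF that] that assms(1,2) by (intro degree_eq_if_card_ball2_ge) auto
  have "v \<in> V" "N v \<subseteq> R"
    using assms(2,3) regular[OF assms(3)] N_subset_ball2[of v] by auto
  show ?thesis
  proof (cases "D = 3")
    case False
    then have "4 \<le> card (N v)"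
      using degree[OF assms(3)] assms(1) by simp
    moreover have "{a, b} = {c, d}"
      if "a \<in> N v" "b \<in> N v" "c \<in> N v" "d \<in> N v" "a \<noteq> b" "c \<noteq> d"
        "branch v a \<inter> branch v b \<noteq> {}" "branch v c \<inter> branch v d \<noteq> {}" for a b c d
      using overlapping_branches_unique[OF \<open>v \<in> V\<close> _ that] regular[OF assms(3)] degree[OF assms(3)]
      by simp
    ultimately obtain a b c where "a \<in> N v" "b \<in> N v" "c \<in> N v" "a \<noteq> b" "a \<noteq> c" "b \<noteq> c"
      "\<not> branch v a \<inter> branch v b \<noteq> {}" "\<not> branch v a \<inter> branch v c \<noteq> {}"
      "\<not> branch v b \<inter> branch v c \<noteq> {}"
      by (rule obtain_triple_avoiding_unique_pair[OF finite_N,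
            where P = "\<lambda>a b. branch v a \<inter> branch v b \<noteq> {}"])
    then have "affordable R {a, b, c}"
      using \<open>N v \<subseteq> R\<close> by (intro affordable_triple) auto
    then show ?thesis by blast
  next
    case True
    \<comment> \<open>An odd number of vertices of odd degree cannot form a component.\<close>
    have "ball2 {v} \<subseteq> V" "odd (card (ball2 {v}))" "\<And>u. u \<in> ball2 {v} \<Longrightarrow> odd (card (N u))"
      using regular[OF assms(3)] True degree by (auto simp: ball2_def)
    then obtain z q where zq: "z \<in> ball2 {v}" "E z q" "q \<notin> ball2 {v}"
      by (rule obtain_edge_leaving)
    have "z \<in> R"
      using zq(1) regular[OF assms(3)] by blast
    moreover have "q \<in> ball2 {z}"
      using zq(2) edge_in_V by (simp add: mem_ball2_singleton)
    ultimately have "q \<in> R"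
      using regular by blast
    have "affordable R {v, q}"
      using regular[OF assms(3)] regular[OF \<open>q \<in> R\<close>]
      by (intro affordable_pair[OF assms(2,3) \<open>q \<in> R\<close> zq]) simp_all
    then show ?thesis by blast
  qed
qed

lemma exists_affordable:
  assumes "3 \<le> D" "R \<subseteq> V" "R \<noteq> {}"
  shows "\<exists>U. affordable R U"
proof (cases "\<exists>v\<in>R. card (ball2 {v} \<inter> R) \<le> D * D - 1")
  case True
  then show ?thesis
    using affordable_singleton assms(2) by blast
next
  case False
  then have dense: "D * D \<le> card (ball2 {u} \<inter> R)" if "u \<in> R" for u
    using that by force
  show ?thesis
  proof (cases "\<exists>v\<in>R. card (ball2 {v}) = D * D + 1")
    case True
    then show ?thesis
      using exists_affordable_near_Moore_vertex[OF assms(1,2) dense] by blast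
  next
    case False
    have "card (ball2 {u}) = D * D \<and> ball2 {u} \<subseteq> R" if "u \<in> R" for u
    proof -
      have "card (ball2 {u} \<inter> R) \<le> card (ball2 {u})"
        by (rule card_mono[OF finite_ball2 Int_lower1])
      moreover have "card (ball2 {u}) \<le> D * D + 1"
        using card_ball2_singleton_le_Moore that assms(2) by blast
      ultimately have "card (ball2 {u} \<inter> R) = card (ball2 {u})" "card (ball2 {u}) = D * D"
        using dense[OF that] False that by force+
      then show ?thesis
        using card_subset_eq[OF finite_ball2 Int_lower1, of "{u}" R] by auto
    qed
    then show ?thesis
      using exists_affordable_if_regular[OF assms(1,2)] assms(3) by blast
  qed
qed

lemma exists_large_odd_independent_subset:
  assumes "3 \<le> D" "R \<subseteq> V"
  shows "\<exists>S\<subseteq>R. odd_independent_set V E S \<and> card R \<le> (D * D - 1) * card S"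
  using assms(2)
proof (induction "card R" arbitrary: R rule: less_induct)
  case less
  show ?case
  proof (cases "R = {}")
    case True
    have "odd_independent_set V E {}"
      by (simp add: odd_independent_set_def independent_set_def)
    then show ?thesis
      using True by auto
  next
    case False
    then obtain U where "U \<subseteq> R" "U \<noteq> {}" and odd_U: "odd_independent_set V E U"
      and cost: "card (ball2 U \<inter> R) \<le> (D * D - 1) * card U"
      using exists_affordable[OF assms(1) less.prems] unfolding affordable_def by blast
    have "finite R"
      using less.prems finite_V finite_subset by blast
    have "U \<subseteq> ball2 U"
      using subset_ball2 \<open>U \<subseteq> R\<close> less.prems by blast
    then have "card (R - ball2 U) < card R"
      using \<open>finite R\<close> \<open>U \<subseteq> R\<close> \<open>U \<noteq> {}\<close> by (intro psubset_card_mono) auto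
    then obtain S where S: "S \<subseteq> R - ball2 U" "odd_independent_set V E S"
      "card (R - ball2 U) \<le> (D * D - 1) * card S"
      using less.hyps[of "R - ball2 U"] less.prems by blast
    have "finite U" "finite S"
      using finite_subset[OF \<open>U \<subseteq> R\<close> \<open>finite R\<close>] finite_subset[of S R] S(1) \<open>finite R\<close>
      by auto
    moreover have "U \<inter> S = {}"
      using S(1) \<open>U \<subseteq> ball2 U\<close> by blast
    ultimately have "card (U \<union> S) = card U + card S"
      by (rule card_Un_disjoint)
    moreover have "card R = card (ball2 U \<inter> R) + card (R - ball2 U)"
      using card_Int_Diff[OF \<open>finite R\<close>, of "ball2 U"] by (simp add: Int_commute)
    ultimately have "card R \<le> (D * D - 1) * card (U \<union> S)"
      using cost S(3) by (simp add: add_mult_distrib2)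
    moreover have "odd_independent_set V E (U \<union> S)"
      using S(1) by (intro odd_independent_Un[OF odd_U S(2)]) blast
    moreover have "U \<union> S \<subseteq> R"
      using \<open>U \<subseteq> R\<close> S(1) by blast
    ultimately show ?thesis
      by blast
  qed
qed

end

theorem theorem5:
  fixes V :: "'a set" and E :: "'a \<Rightarrow> 'a \<Rightarrow> bool"
  assumes "simple_graph V E"
    and "max_degree V E \<ge> 3"
  shows "real (alpha_od V E) \<ge> real (card V) / (real (max_degree V E) ^ 2 - 1)"
proof -
  let ?D = "max_degree V E"
  interpret sgraph V E
    using assms(1) by unfold_locales
  interpret degree_bounded_graph V E ?D
    by unfold_locales (rule card_N_le_max_degree)
  obtain S where S: "odd_independent_set V E S" "card V \<le> (?D * ?D - 1) * card S"
    using exists_large_odd_independent_subset[OF assms(2)] by blast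
  have "3 * 3 \<le> ?D * ?D"
    using assms(2) by (intro mult_le_mono) auto
  then have "1 \<le> ?D * ?D"
    by linarith
  then have D2: "real (?D * ?D - 1) = real ?D ^ 2 - 1"
    by (simp add: of_nat_diff power2_eq_square)
  have "real (card V) \<le> real (?D * ?D - 1) * real (card S)"
    using S(2) by (metis of_nat_le_iff of_nat_mult)
  also have "\<dots> \<le> real (?D * ?D - 1) * real (alpha_od V E)"
    using card_le_alpha_od[OF S(1)] by (intro mult_left_mono) auto
  finally show ?thesis
    using \<open>3 * 3 \<le> ?D * ?D\<close> D2 by (simp add: divide_le_eq mult.commute)
qed

end
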